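(* Let $N\ge3$ and $p>p_{\rm S}$. For $\gamma>0$ let $u(\cdot,\gamma)$ solve (IVP$_\gamma$), set $y(t,\gamma):=2^{-\frac{q}{p-1}}\frac{u(r,\gamma)}{ar^{-\mu}}$ with $r=e^{mt}$, and $\hat y(s,\gamma):=y\big(s-\frac{\log\gamma}{m\mu},\gamma\big)$. Let $\bar u$ be the solution of $\bar u''+\frac{N-1}{\rho}\bar u'+\bar u^p=0$ $(0<\rho<\infty)$, $\bar u(0)=2^{-\frac{q}{p-1}}$, $\bar u'(0)=0$, and $\bar y(s):=\frac{\bar u(e^{ms})}{ae^{-m\mu s}}$. Then for every $s_0\in\mathbb{R}$, as $\gamma\to\infty$, $\hat y(\cdot,\gamma)\to\bar y$ and $\partial_s\hat y(\cdot,\gamma)\to\bar y'$ uniformly on $(-\infty,s_0]$.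
   Context: $A(r)=\frac{2}{1+r^2}$, $p_{\rm S}=\frac{N+2}{N-2}$, $q=\frac{N-2}{2}(p-p_{\rm S})$, $\mu=\frac{2}{p-1}$, $a=\{\mu(N-2-\mu)\}^{\mu/2}$, $m=a^{-(p-1)/2}$. (IVP$_\gamma$): $u''+\frac{N-1}{r}u'+\frac{N(N-2)}{4}A(r)^2u+A(r)^{-q}|u|^{p-1}u=0$ on $(0,\infty)$, $u(0)=\gamma$, $u'(0)=0$. (For $p>p_{\rm S}$, $\bar u>0$ on $[0,\infty)$.) *)

theory Defs
  imports "HOL-Analysis.Analysis"
begin

definition A_fun :: "real \<Rightarrow> real" where
  "A_fun r = 2 / (1 + r\<^sup>2)"

definition pS :: "nat \<Rightarrow> real" where
  "pS N = (real N + 2) / (real N - 2)"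

definition q_exp :: "nat \<Rightarrow> real \<Rightarrow> real" where
  "q_exp N p = (real N - 2) / 2 * (p - pS N)"

definition mu :: "real \<Rightarrow> real" where
  "mu p = 2 / (p - 1)"

definition a_const :: "nat \<Rightarrow> real \<Rightarrow> real" where
  "a_const N p = (mu p * (real N - 2 - mu p)) powr (mu p / 2)"

definition m_const :: "nat \<Rightarrow> real \<Rightarrow> real" where
  "m_const N p = a_const N p powr (-(p - 1) / 2)"

definition ivp_sol :: "nat \<Rightarrow> real \<Rightarrow> real \<Rightarrow> (real \<Rightarrow> real) \<Rightarrow> bool" where
  "ivp_sol N p \<gamma> u \<longleftrightarrow>
     (\<exists>u' u''. (\<forall>r\<ge>0. (u has_real_derivative u' r) (at r within {0..})) \<and>
        (\<forall>r>0. (u' has_real_derivative u'' r) (at r)) \<and>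
        (\<forall>r>0. u'' r + (real N - 1) / r * u' r
                + real N * (real N - 2) / 4 * (A_fun r)\<^sup>2 * u r
                + A_fun r powr (- q_exp N p) * (\<bar>u r\<bar> powr (p - 1) * u r) = 0) \<and>
        u 0 = \<gamma> \<and> u' 0 = 0)"

text \<open>Solution of ubar'' + (N-1)/rho ubar' + ubar^p = 0, ubar(0) = 2^(-q/(p-1)), ubar'(0)=0.
  The nonlinearity is written |ubar|^(p-1) ubar, which equals ubar^p since ubar > 0.\<close>
definition ubar_sol :: "nat \<Rightarrow> real \<Rightarrow> (real \<Rightarrow> real) \<Rightarrow> bool" where
  "ubar_sol N p u \<longleftrightarrow>
     (\<exists>u' u''. (\<forall>r\<ge>0. (u has_real_derivative u' r) (at r within {0..})) \<and>
        (\<forall>r>0. (u' has_real_derivative u'' r) (at r)) \<and>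
        (\<forall>r>0. u'' r + (real N - 1) / r * u' r + \<bar>u r\<bar> powr (p - 1) * u r = 0) \<and>
        u 0 = 2 powr (- (q_exp N p / (p - 1))) \<and> u' 0 = 0)"

definition y_fun :: "nat \<Rightarrow> real \<Rightarrow> (real \<Rightarrow> real \<Rightarrow> real) \<Rightarrow> real \<Rightarrow> real \<Rightarrow> real" where
  "y_fun N p u \<gamma> t =
     2 powr (- (q_exp N p / (p - 1))) * u \<gamma> (exp (m_const N p * t))
       / (a_const N p * exp (m_const N p * t) powr (- mu p))"

definition yhat :: "nat \<Rightarrow> real \<Rightarrow> (real \<Rightarrow> real \<Rightarrow> real) \<Rightarrow> real \<Rightarrow> real \<Rightarrow> real" where
  "yhat N p u \<gamma> s = y_fun N p u \<gamma> (s - ln \<gamma> / (m_const N p * mu p))"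

definition ybar :: "nat \<Rightarrow> real \<Rightarrow> (real \<Rightarrow> real) \<Rightarrow> real \<Rightarrow> real" where
  "ybar N p ub s = ub (exp (m_const N p * s)) / (a_const N p * exp (- m_const N p * mu p * s))"

end

theory Submission
  imports Defs
begin

text \<open>
  Rescale \<open>u(\<cdot>, \<gamma>)\<close> to \<open>v\<^sub>\<gamma>(t) = 2^(-q/(p-1)) u(\<gamma>^(-1/\<mu>) t, \<gamma>) / \<gamma>\<close>. Then \<open>v\<^sub>\<gamma>(0) = ubar(0)\<close>, and
  on a fixed interval \<open>[0, R]\<close> the function \<open>v\<^sub>\<gamma>\<close> solves the equation of \<open>ubar\<close> up to perturbation
  terms of order \<open>\<gamma>^(-2/\<mu>)\<close>. A Gronwall estimate for the energy
  \<open>(v\<^sub>\<gamma> - ubar)\<^sup>2 + (v\<^sub>\<gamma>' - ubar')\<^sup>2\<close>, valid while \<open>v\<^sub>\<gamma> - ubar\<close> stays small (which a continuity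
  argument guarantees), gives \<open>v\<^sub>\<gamma> \<rightarrow> ubar\<close> in \<open>C\<^sup>1[0, R]\<close>. Finally \<open>yhat(\<cdot>, \<gamma>)\<close> and \<open>ybar\<close> are the
  Emden--Fowler transforms \<open>s \<mapsto> f(e\<^sup>m\<^sup>s) e\<^sup>m\<^sup>\<mu>\<^sup>s / a\<close> of \<open>v\<^sub>\<gamma>\<close> and \<open>ubar\<close>; for \<open>s \<le> s\<^sub>0\<close> the radius
  \<open>e\<^sup>m\<^sup>s\<close> stays in \<open>(0, e\<^sup>m\<^sup>s\<^sup>0]\<close> and the weight \<open>e\<^sup>m\<^sup>\<mu>\<^sup>s\<close> is bounded, so the convergence transfers.
\<close>

section \<open>Signed powers\<close>

definition spow :: "real \<Rightarrow> real \<Rightarrow> real" where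
  "spow p x = \<bar>x\<bar> powr (p - 1) * x"

lemma powr_minus_one_mult_self:
  fixes x p :: real
  shows "x \<ge> 0 \<Longrightarrow> p \<ge> 1 \<Longrightarrow> x powr (p - 1) * x = x powr p"
  by (cases "x = 0") (simp_all add: powr_add[of x "p - 1" 1, simplified])

lemma spow_nonneg: "x \<ge> 0 \<Longrightarrow> p \<ge> 1 \<Longrightarrow> spow p x = x powr p"
  by (simp add: spow_def powr_minus_one_mult_self)

lemma spow_nonpos: "x \<le> 0 \<Longrightarrow> p \<ge> 1 \<Longrightarrow> spow p x = - ((- x) powr p)"
  using powr_minus_one_mult_self[of "- x" p] by (simp add: spow_def)

lemma abs_spow: "p \<ge> 1 \<Longrightarrow> \<bar>spow p x\<bar> = \<bar>x\<bar> powr p"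
  by (simp add: spow_def abs_mult powr_minus_one_mult_self)

lemma spow_mult_pos: "c > 0 \<Longrightarrow> spow p (c * x) = c powr p * spow p x"
  by (simp add: spow_def abs_mult powr_mult powr_diff field_simps)

lemma powr_diff_le_mult:
  fixes p K x y :: real
  assumes p: "p \<ge> 1" and y: "0 \<le> y" "y \<le> x" "x \<le> K"
  shows "x powr p - y powr p \<le> p * K powr (p - 1) * (x - y)"
proof (cases "y = 0")
  case True
  have "x powr p = x powr (p - 1) * x" using powr_minus_one_mult_self[of x p] y p by simp
  also have "\<dots> \<le> K powr (p - 1) * x"
    using p y by (intro mult_right_mono powr_mono2) auto
  also have "\<dots> \<le> p * K powr (p - 1) * x"
    using p y mult_right_mono[of 1 p "K powr (p - 1)"] by (intro mult_right_mono) auto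
  finally show ?thesis using True by simp
next
  case False
  show ?thesis
  proof (cases "y = x")
    case False
    with y \<open>y \<noteq> 0\<close> have "0 < y" "y < x" by auto
    then obtain z where z: "y < z" "z < x" "x powr p - y powr p = (x - y) * (p * z powr (p - 1))"
      using MVT2[of y x "\<lambda>t. t powr p" "\<lambda>t. p * t powr (p - 1)"] has_real_derivative_powr by force
    have "z powr (p - 1) \<le> K powr (p - 1)" using p z y \<open>0 < y\<close> by (intro powr_mono2) auto
    then have "(x - y) * (p * z powr (p - 1)) \<le> (x - y) * (p * K powr (p - 1))"
      using p \<open>y < x\<close> by (intro mult_left_mono) auto
    then show ?thesis using z by (simp add: algebra_simps)
  qed simp
qed

lemma spow_lipschitz:
  assumes p: "p \<ge> 1" and "\<bar>x\<bar> \<le> K" "\<bar>y\<bar> \<le> K"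
  shows "\<bar>spow p x - spow p y\<bar> \<le> p * K powr (p - 1) * \<bar>x - y\<bar>"
proof -
  have ordered: "\<bar>spow p x - spow p y\<bar> \<le> p * K powr (p - 1) * \<bar>x - y\<bar>"
    if "y \<le> x" "\<bar>x\<bar> \<le> K" "\<bar>y\<bar> \<le> K" for x y
  proof -
    consider "0 \<le> y" | "x \<le> 0" | "y < 0" "0 < x" by linarith
    then show ?thesis
    proof cases
      case 1
      then show ?thesis using that p powr_mono2[of p y x]
        powr_diff_le_mult[of p y x K] by (simp add: spow_nonneg)
    next
      case 2
      then show ?thesis using that p powr_mono2[of p "- x" "- y"]
        powr_diff_le_mult[of p "- x" "- y" K] by (simp add: spow_nonpos)
    next
      case 3
      then show ?thesis using that p powr_diff_le_mult[of p 0 x K] powr_diff_le_mult[of p 0 "- y" K]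
        by (simp add: spow_nonneg spow_nonpos algebra_simps)
    qed
  qed
  show ?thesis
    using ordered[of x y] ordered[of y x] assms by (cases "y \<le> x") (auto simp: abs_minus_commute)
qed

section \<open>An energy estimate for perturbed radial equations\<close>

lemma energy_dissipation_nonpos:
  fixes x x' D \<kappa> \<delta> L :: real
  assumes "\<kappa> \<ge> 0" "L \<ge> 0" "\<bar>D\<bar> \<le> \<delta> + L * \<bar>x\<bar>"
  shows "2 * x * x' - 2 * x' * (\<kappa> * x' + D) - (L + 2) * (x\<^sup>2 + x'\<^sup>2) - \<delta>\<^sup>2 \<le> 0"
proof -
  have "- (x' * D) \<le> \<bar>x'\<bar> * \<bar>D\<bar>"
    by (simp add: abs_mult[symmetric])
  also have "\<dots> \<le> \<bar>x'\<bar> * \<delta> + L * (\<bar>x\<bar> * \<bar>x'\<bar>)"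
    using mult_left_mono[OF assms(3) abs_ge_zero[of x']] by (simp add: algebra_simps)
  finally have "- (x' * D) \<le> \<bar>x'\<bar> * \<delta> + L * (\<bar>x\<bar> * \<bar>x'\<bar>)" .
  moreover have "2 * (\<bar>x\<bar> * \<bar>x'\<bar>) \<le> x\<^sup>2 + x'\<^sup>2" "2 * (\<bar>x'\<bar> * \<delta>) \<le> x'\<^sup>2 + \<delta>\<^sup>2"
    using zero_le_power2[of "\<bar>x\<bar> - \<bar>x'\<bar>"] zero_le_power2[of "\<bar>x'\<bar> - \<delta>"]
    by (simp_all add: power2_diff)
  moreover have "2 * (L * (\<bar>x\<bar> * \<bar>x'\<bar>)) \<le> L * (x\<^sup>2 + x'\<^sup>2)"
    using mult_left_mono[OF calculation(2) assms(2)] by (simp only: mult.left_commute[of L 2])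
  moreover have "x * x' \<le> \<bar>x\<bar> * \<bar>x'\<bar>" "0 \<le> \<kappa> * x'\<^sup>2" "0 \<le> x\<^sup>2"
    using assms(1) by (simp_all add: abs_mult[symmetric])
  moreover have "2 * x * x' - 2 * x' * (\<kappa> * x' + D) - (L + 2) * (x\<^sup>2 + x'\<^sup>2) - \<delta>\<^sup>2
      = 2 * (x * x') - 2 * (\<kappa> * x'\<^sup>2) - 2 * (x' * D) - L * (x\<^sup>2 + x'\<^sup>2) - 2 * (x\<^sup>2 + x'\<^sup>2) - \<delta>\<^sup>2"
    by (simp add: algebra_simps power2_eq_square)
  ultimately show ?thesis by (smt (verit))
qed

context
  fixes e e' e'' D :: "real \<Rightarrow> real" and k :: real
  assumes k_nonneg: "k \<ge> 0"
    and e_deriv: "\<And>t. t \<ge> 0 \<Longrightarrow> (e has_real_derivative e' t) (at t within {0..})"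
    and e'_deriv: "\<And>t. t > 0 \<Longrightarrow> (e' has_real_derivative e'' t) (at t)"
    and radial_eq: "\<And>t. t > 0 \<Longrightarrow> e'' t + k / t * e' t + D t = 0"
    and e_0: "e 0 = 0" and e'_0: "e' 0 = 0"
begin

lemma energy_small_near_zero:
  assumes "t > 0" "\<eta> > 0"
  obtains \<xi> where "0 < \<xi>" "\<xi> < t" "(e \<xi>)\<^sup>2 + (e' \<xi>)\<^sup>2 < \<eta>"
proof -
  define r where "r = sqrt (\<eta> / 2)"
  have r: "r > 0" "r\<^sup>2 = \<eta> / 2" using assms by (simp_all add: r_def)
  have d0: "(e has_real_derivative 0) (at 0 within {0..})" using e_deriv[of 0] e'_0 by simp
  have at_right_le: "at_right (0::real) \<le> at 0 within {0..}" by (rule at_le) auto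
  have "(e \<longlongrightarrow> 0) (at_right 0)"
    using DERIV_continuous[OF d0] e_0 tendsto_mono[OF at_right_le] by (simp add: continuous_within)
  moreover have "((\<lambda>y. e y / y) \<longlongrightarrow> 0) (at_right 0)"
    using d0 e_0 tendsto_mono[OF at_right_le] by (simp add: has_field_derivative_iff)
  ultimately have "eventually (\<lambda>y. \<bar>e y\<bar> < r \<and> \<bar>e y / y\<bar> < r) (at_right 0)"
    using tendstoD r(1) by (fastforce simp: dist_real_def intro: eventually_conj)
  then obtain b where b: "b > 0" and small: "\<And>y. 0 < y \<Longrightarrow> y < b \<Longrightarrow> \<bar>e y\<bar> < r \<and> \<bar>e y / y\<bar> < r"
    unfolding eventually_at_right_field by auto
  define s where "s = min b t / 2"
  have s: "0 < s" "s < b" "s < t" using b assms by (auto simp: s_def)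
  \<comment> \<open>the mean value theorem turns the smallness of the difference quotient into smallness of e'\<close>
  obtain \<xi> where \<xi>: "0 < \<xi>" "\<xi> < s" and mvt: "e s - e 0 = e' \<xi> * (s - 0)"
  proof -
    have "(e has_derivative (*) (e' x)) (at x within {0..s})" if "0 \<le> x" "x \<le> s" for x
      using DERIV_subset[OF e_deriv, of x "{0..s}"] that by (auto simp: has_field_derivative_def mult.commute)
    from mvt_simple[OF s(1) this] that show ?thesis by (auto simp: mult.commute)
  qed
  have "\<bar>e' \<xi>\<bar> < r" "\<bar>e \<xi>\<bar> < r"
    using mvt e_0 s small[of s] small[of \<xi>] \<xi> by (simp_all add: field_simps)
  then have "(e \<xi>)\<^sup>2 + (e' \<xi>)\<^sup>2 < \<eta>"
    using power_strict_mono[of "\<bar>e \<xi>\<bar>" r 2] power_strict_mono[of "\<bar>e' \<xi>\<bar>" r 2] r by simp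
  then show ?thesis using \<xi> s by (intro that[of \<xi>]) auto
qed

text \<open>Gronwall: \<open>exp (- (L + 2) t) (e\<^sup>2 + e'\<^sup>2 + \<delta>\<^sup>2 / (L + 2))\<close> is nonincreasing, the
  damping term \<open>k / t * e'\<close> only helping.\<close>

lemma weighted_energy_bound:
  assumes L: "L \<ge> 0" and t: "t > 0"
    and bound: "\<And>s. 0 < s \<Longrightarrow> s \<le> t \<Longrightarrow> \<bar>D s\<bar> \<le> \<delta> + L * \<bar>e s\<bar>"
  shows "(e t)\<^sup>2 + (e' t)\<^sup>2 \<le> exp ((L + 2) * t) * \<delta>\<^sup>2 / (L + 2)"
proof -
  define C where "C = L + 2"
  have C: "C > 0" using L by (simp add: C_def)
  define Q where "Q s = (e s)\<^sup>2 + (e' s)\<^sup>2" for s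
  define \<Phi> where "\<Phi> s = exp (- C * s) * (Q s + \<delta>\<^sup>2 / C)" for s
  have \<Phi>_deriv: "(\<Phi> has_real_derivative
      exp (- C * s) * (2 * e s * e' s - 2 * e' s * (k / s * e' s + D s) - C * Q s - \<delta>\<^sup>2)) (at s)"
    if "s > 0" for s
  proof -
    have "(e has_real_derivative e' s) (at s)"
      using e_deriv[of s] that at_within_interior[of s "{0..}"] by simp
    then have "(\<Phi> has_real_derivative
        exp (- C * s) * (2 * e s * e' s + 2 * e' s * e'' s - C * Q s - \<delta>\<^sup>2)) (at s)"
      unfolding \<Phi>_def Q_def using e'_deriv[OF that] C
      by (auto intro!: derivative_eq_intros simp: algebra_simps)
    moreover have "e'' s = - (k / s * e' s + D s)" using radial_eq[OF that] by simp
    ultimately show ?thesis by (simp add: algebra_simps)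
  qed
  have \<Phi>_antimono: "\<Phi> t \<le> \<Phi> s" if "0 < s" "s \<le> t" for s
  proof (rule DERIV_nonpos_imp_nonincreasing[OF that(2)])
    fix x assume "s \<le> x" "x \<le> t"
    with that have "2 * e x * e' x - 2 * e' x * (k / x * e' x + D x) - C * Q x - \<delta>\<^sup>2 \<le> 0"
      unfolding C_def Q_def using k_nonneg L bound[of x]
      by (intro energy_dissipation_nonpos) auto
    with \<Phi>_deriv[of x] \<open>s \<le> x\<close> that show "\<exists>y. DERIV \<Phi> x :> y \<and> y \<le> 0"
      by (auto intro!: mult_nonneg_nonpos)
  qed
  have "\<Phi> t \<le> \<delta>\<^sup>2 / C + \<eta>" if \<eta>: "\<eta> > 0" for \<eta>
  proof -
    obtain \<xi> where \<xi>: "0 < \<xi>" "\<xi> < t" "Q \<xi> < \<eta>"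
      using energy_small_near_zero[OF t \<eta>] unfolding Q_def by blast
    have "\<Phi> \<xi> \<le> Q \<xi> + \<delta>\<^sup>2 / C"
      unfolding \<Phi>_def using C \<xi> by (intro mult_left_le_one_le) (auto simp: Q_def)
    then show ?thesis using \<Phi>_antimono[of \<xi>] \<xi> by simp
  qed
  then have "\<Phi> t \<le> \<delta>\<^sup>2 / C" by (rule field_le_epsilon)
  then have "exp (C * t) * \<Phi> t \<le> exp (C * t) * (\<delta>\<^sup>2 / C)" by (rule mult_left_mono) simp
  moreover have "exp (C * t) * \<Phi> t = Q t + \<delta>\<^sup>2 / C"
    by (simp add: \<Phi>_def exp_minus field_simps)
  moreover have "0 \<le> \<delta>\<^sup>2 / C" using C by simp
  ultimately show ?thesis unfolding Q_def[symmetric] C_def[symmetric] times_divide_eq_right by linarith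
qed

text \<open>First exit argument: the a priori bound keeps \<open>|e| < 1/2\<close>, so the hypothesis on \<open>D\<close>,
  required only where \<open>|e| \<le> 1\<close>, holds on all of \<open>[0, R]\<close>.\<close>

lemma radial_energy_estimate:
  assumes L: "L \<ge> 0" and R: "R > 0"
    and bound: "\<And>t. 0 < t \<Longrightarrow> t \<le> R \<Longrightarrow> \<bar>e t\<bar> \<le> 1 \<Longrightarrow> \<bar>D t\<bar> \<le> \<delta> + L * \<bar>e t\<bar>"
    and small: "exp ((L + 2) * R) * \<delta>\<^sup>2 / (L + 2) < 1 / 4"
    and t: "t \<in> {0..R}"
  shows "(e t)\<^sup>2 + (e' t)\<^sup>2 \<le> exp ((L + 2) * R) * \<delta>\<^sup>2 / (L + 2)"
proof -
  have mono_R: "exp ((L + 2) * s) * \<delta>\<^sup>2 / (L + 2) \<le> exp ((L + 2) * R) * \<delta>\<^sup>2 / (L + 2)"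
    if "s \<le> R" for s
    using that L by (auto intro!: divide_right_mono mult_right_mono)
  have e_cont: "continuous_on {0..R} e"
    by (rule DERIV_continuous_on[of _ _ e']) (rule DERIV_subset[OF e_deriv], auto)
  have half: "\<bar>e s\<bar> < 1 / 2" if "s \<in> {0..R}" for s
  proof (rule ccontr)
    assume big: "\<not> \<bar>e s\<bar> < 1 / 2"
    define S where "S = {0..R} \<inter> (\<lambda>t. \<bar>e t\<bar>) -` {1/2..}"
    have "closed S" unfolding S_def
      by (rule continuous_closed_preimage[OF continuous_on_rabs[OF e_cont]]) auto
    moreover have "bounded S" unfolding S_def by (rule bounded_subset[of "{0..R}"]) auto
    ultimately have "compact S" by (simp add: compact_eq_bounded_closed)
    moreover have "S \<noteq> {}" using that big by (auto simp: S_def)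
    ultimately obtain T where T: "T \<in> S" and T_min: "\<And>y. y \<in> S \<Longrightarrow> T \<le> y"
      using continuous_attains_inf[of S id] by (auto simp: continuous_on_id)
    have T_le: "T \<le> R" and eT_ge: "\<bar>e T\<bar> \<ge> 1/2" and "T \<ge> 0" using T by (auto simp: S_def)
    with e_0 have T_pos: "T > 0" by (cases "T = 0") auto
    have "continuous_on {0..T} (\<lambda>t. \<bar>e t\<bar>)"
      using continuous_on_subset[OF continuous_on_rabs[OF e_cont]] T_le by auto
    then obtain x where x: "0 \<le> x" "x \<le> T" "\<bar>e x\<bar> = 1/2"
      using IVT'[of "\<lambda>t. \<bar>e t\<bar>" 0 "1/2" T] eT_ge e_0 T_pos by auto
    then have "x \<in> S" using T_le by (simp add: S_def)
    with T_min x have eT: "\<bar>e T\<bar> = 1/2" by force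
    have "\<bar>e s\<bar> \<le> 1" if "0 < s" "s \<le> T" for s
    proof (cases "s = T")
      case False
      then have "s \<notin> S" using T_min[of s] that by force
      then show ?thesis using that T_le by (simp add: S_def)
    qed (use eT in simp)
    then have "(e T)\<^sup>2 + (e' T)\<^sup>2 \<le> exp ((L + 2) * T) * \<delta>\<^sup>2 / (L + 2)"
      using T_le by (intro weighted_energy_bound[OF L T_pos] bound) auto
    then have "(e T)\<^sup>2 + (e' T)\<^sup>2 < 1/4"
      using mono_R[OF T_le] small by linarith
    then have "\<bar>e T\<bar>\<^sup>2 < 1/4"
      using zero_le_power2[of "e' T"] unfolding power2_abs by linarith
    then have "\<bar>e T\<bar>\<^sup>2 < (1/2)\<^sup>2" by (simp add: power_divide)
    then have "\<bar>e T\<bar> < 1/2" by (rule power_less_imp_less_base) simp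
    with eT show False by simp
  qed
  show ?thesis
  proof (cases "t = 0")
    case False
    have "\<bar>e s\<bar> \<le> 1" if "0 < s" "s \<le> t" for s
      using half[of s] that t by simp
    then have "(e t)\<^sup>2 + (e' t)\<^sup>2 \<le> exp ((L + 2) * t) * \<delta>\<^sup>2 / (L + 2)"
      using t False by (intro weighted_energy_bound[OF L] bound) auto
    then show ?thesis using mono_R[of t] t by simp
  qed (use e_0 e'_0 L in simp)
qed

end

lemma uniform_limit_of_energy_bound:
  fixes f f' :: "'a \<Rightarrow> 'b \<Rightarrow> real" and g g' :: "'b \<Rightarrow> real" and B :: "'a \<Rightarrow> real"
  assumes B: "(B \<longlongrightarrow> 0) F"
    and energy: "eventually (\<lambda>\<gamma>. \<forall>t\<in>S. (f \<gamma> t - g t)\<^sup>2 + (f' \<gamma> t - g' t)\<^sup>2 \<le> B \<gamma>) F"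
  shows "uniform_limit S f g F" and "uniform_limit S f' g' F"
proof -
  have close: "eventually (\<lambda>\<gamma>. \<forall>t\<in>S. \<bar>f \<gamma> t - g t\<bar> < \<eta> \<and> \<bar>f' \<gamma> t - g' t\<bar> < \<eta>) F"
    if \<eta>: "\<eta> > 0" for \<eta>
    using energy order_tendstoD(2)[OF B zero_less_power[OF \<eta>, of 2]]
  proof eventually_elim
    case (elim \<gamma>)
    have small: "\<bar>x\<bar> < \<eta>" if "x\<^sup>2 < \<eta>\<^sup>2" for x
      using power_less_imp_less_base[of "\<bar>x\<bar>" 2 \<eta>] that \<eta> by simp
    show ?case
    proof
      fix t assume "t \<in> S"
      then have "(f \<gamma> t - g t)\<^sup>2 + (f' \<gamma> t - g' t)\<^sup>2 < \<eta>\<^sup>2" using elim by fastforce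
      then have "(f \<gamma> t - g t)\<^sup>2 < \<eta>\<^sup>2" "(f' \<gamma> t - g' t)\<^sup>2 < \<eta>\<^sup>2"
        using zero_le_power2[of "f \<gamma> t - g t"] zero_le_power2[of "f' \<gamma> t - g' t"] by linarith+
      then show "\<bar>f \<gamma> t - g t\<bar> < \<eta> \<and> \<bar>f' \<gamma> t - g' t\<bar> < \<eta>"
        using small by blast
    qed
  qed
  show "uniform_limit S f g F" "uniform_limit S f' g' F"
    unfolding uniform_limit_iff dist_real_def
    using eventually_mono[OF close] by auto
qed

section \<open>Blow-up rescaling\<close>

lemma deriv_at_pos_within_nonneg:
  "(f has_real_derivative f') (at t within {0..}) \<Longrightarrow> t > 0 \<Longrightarrow> deriv f t = f'"
  using at_within_interior[of t "{0..}"] by (auto intro: DERIV_imp_deriv)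

lemma differentiable_at_pos_within_nonneg:
  assumes "\<forall>r\<ge>0. (f has_real_derivative f' r) (at r within {0..})" and "r > 0"
  shows "f differentiable (at r)"
proof -
  have "(f has_real_derivative f' r) (at r within {0..})" using assms by simp
  then have "(f has_real_derivative f' r) (at r)"
    using assms(2) at_within_interior[of r "{0..}"] by simp
  then show ?thesis by (auto simp: real_differentiable_def)
qed

lemma ubar_sol_differentiable: "ubar_sol N p ub \<Longrightarrow> r > 0 \<Longrightarrow> ub differentiable (at r)"
  unfolding ubar_sol_def using differentiable_at_pos_within_nonneg by blast

lemma radial_ode_rescale:
  fixes U U' U'' :: "real \<Rightarrow> real" and F :: "real \<Rightarrow> real \<Rightarrow> real" and \<epsilon> \<kappa> k :: real
  assumes \<epsilon>: "\<epsilon> > 0"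
    and U: "\<forall>r\<ge>0. (U has_real_derivative U' r) (at r within {0..})"
    and U': "\<forall>r>0. (U' has_real_derivative U'' r) (at r)"
    and ode: "\<forall>r>0. U'' r + k / r * U' r + F r (U r) = 0"
  shows "\<forall>t\<ge>0. ((\<lambda>t. \<kappa> * U (\<epsilon> * t)) has_real_derivative \<kappa> * \<epsilon> * U' (\<epsilon> * t)) (at t within {0..})"
    and "\<forall>t>0. ((\<lambda>t. \<kappa> * \<epsilon> * U' (\<epsilon> * t)) has_real_derivative \<kappa> * \<epsilon>\<^sup>2 * U'' (\<epsilon> * t)) (at t)"
    and "\<forall>t>0. \<kappa> * \<epsilon>\<^sup>2 * U'' (\<epsilon> * t) + k / t * (\<kappa> * \<epsilon> * U' (\<epsilon> * t))
               + \<kappa> * \<epsilon>\<^sup>2 * F (\<epsilon> * t) (U (\<epsilon> * t)) = 0"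
proof -
  have "(\<lambda>t. \<epsilon> * t) ` {0..} = {0..}"
    using \<epsilon> by (auto intro!: image_eqI[of _ _ "x / \<epsilon>" for x])
  then have "((U \<circ> (\<lambda>t. \<epsilon> * t)) has_real_derivative U' (\<epsilon> * t) * \<epsilon>) (at t within {0..})"
    if "t \<ge> 0" for t
    using U that \<epsilon> by (intro DERIV_image_chain) (auto intro!: derivative_eq_intros)
  from DERIV_cmult[OF this, where c = \<kappa>]
  show "\<forall>t\<ge>0. ((\<lambda>t. \<kappa> * U (\<epsilon> * t)) has_real_derivative \<kappa> * \<epsilon> * U' (\<epsilon> * t)) (at t within {0..})"
    by (simp add: o_def mult_ac)
  have "((\<lambda>t. U' (\<epsilon> * t)) has_real_derivative U'' (\<epsilon> * t) * \<epsilon>) (at t)" if "t > 0" for t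
    using U' that \<epsilon> by (intro DERIV_chain2[where f = U']) (auto intro!: derivative_eq_intros)
  from DERIV_cmult[OF this, where c = "\<kappa> * \<epsilon>"]
  show "\<forall>t>0. ((\<lambda>t. \<kappa> * \<epsilon> * U' (\<epsilon> * t)) has_real_derivative \<kappa> * \<epsilon>\<^sup>2 * U'' (\<epsilon> * t)) (at t)"
    by (simp add: power2_eq_square mult_ac)
  show "\<forall>t>0. \<kappa> * \<epsilon>\<^sup>2 * U'' (\<epsilon> * t) + k / t * (\<kappa> * \<epsilon> * U' (\<epsilon> * t))
               + \<kappa> * \<epsilon>\<^sup>2 * F (\<epsilon> * t) (U (\<epsilon> * t)) = 0"
  proof (intro allI impI)
    fix t :: real
    assume t: "t > 0"
    have "k / t * (\<kappa> * \<epsilon> * U' (\<epsilon> * t)) = \<kappa> * \<epsilon>\<^sup>2 * (k / (\<epsilon> * t) * U' (\<epsilon> * t))"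
      using \<epsilon> t by (simp add: field_simps power2_eq_square)
    then show "\<kappa> * \<epsilon>\<^sup>2 * U'' (\<epsilon> * t) + k / t * (\<kappa> * \<epsilon> * U' (\<epsilon> * t))
               + \<kappa> * \<epsilon>\<^sup>2 * F (\<epsilon> * t) (U (\<epsilon> * t)) = 0"
      using ode \<epsilon> t by (simp only: distrib_left[symmetric]) simp
  qed
qed

lemma supercritical_constants:
  assumes N: "N \<ge> 3" and p: "p > pS N"
  shows "p > 1" and "mu p > 0" and "mu p < real N - 2" and "q_exp N p > 0"
    and "a_const N p > 0" and "m_const N p > 0"
proof -
  have N': "real N \<ge> 3" using N by simp
  have pS: "pS N * (real N - 2) = real N + 2" "pS N > 1"
    using N' by (simp_all add: pS_def field_simps)
  show p1: "p > 1" using p pS by simp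
  show mu: "mu p > 0" using p1 by (simp add: mu_def)
  have "(real N - 2) * (p - 1) > 2"
    using pS mult_strict_right_mono[OF p, of "real N - 2"] N' by (simp add: algebra_simps)
  then show mu': "mu p < real N - 2" using p1 by (simp add: mu_def divide_less_eq mult.commute)
  show "q_exp N p > 0" using p N' by (simp add: q_exp_def)
  show a: "a_const N p > 0" using mu mu' by (simp add: a_const_def)
  show "m_const N p > 0" using a by (simp add: m_const_def)
qed

definition blowup_rescaling :: "nat \<Rightarrow> real \<Rightarrow> (real \<Rightarrow> real \<Rightarrow> real) \<Rightarrow> real \<Rightarrow> real \<Rightarrow> real" where
  "blowup_rescaling N p u \<gamma> t =
     2 powr (- (q_exp N p / (p - 1))) / \<gamma> * u \<gamma> (\<gamma> powr (- 1 / mu p) * t)"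

lemma two_powr_mult_A_fun_powr: "2 powr q * A_fun r powr (- q) = (1 + r\<^sup>2) powr q"
proof -
  have "1 + r\<^sup>2 > 0" by (simp add: add_pos_nonneg)
  then show ?thesis by (simp add: A_fun_def powr_minus_divide powr_divide)
qed

lemma rescaled_nonlinearity:
  fixes \<gamma> p q r x :: real
  assumes \<gamma>: "\<gamma> > 0" and p: "p > 1"
  defines "\<kappa> \<equiv> 2 powr (- (q / (p - 1))) / \<gamma>"
  shows "\<kappa> * (\<gamma> powr (- 1 / mu p))\<^sup>2 * (A_fun r powr (- q) * spow p (x / \<kappa>))
           = (1 + r\<^sup>2) powr q * spow p x"
proof -
  have \<kappa>: "\<kappa> > 0" using \<gamma> by (simp add: \<kappa>_def)
  have "- 1 / mu p + - 1 / mu p = 1 - p" using p by (simp add: mu_def field_simps)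
  then have \<epsilon>2: "(\<gamma> powr (- 1 / mu p))\<^sup>2 = \<gamma> powr (1 - p)"
    by (simp add: power2_eq_square powr_add[symmetric])
  have "\<kappa> * (1 / \<kappa>) powr p = (1 / \<kappa>) powr (p - 1)"
    using powr_minus_one_mult_self[of "1 / \<kappa>" p] \<kappa> p by (simp add: field_simps)
  also have "\<dots> = \<gamma> powr (p - 1) * 2 powr q"
    using \<gamma> p by (simp add: \<kappa>_def powr_divide powr_powr powr_minus_divide powr_mult)
  finally have \<kappa>p: "\<kappa> * (1 / \<kappa>) powr p = \<gamma> powr (p - 1) * 2 powr q" .
  have "\<kappa> * (\<gamma> powr (- 1 / mu p))\<^sup>2 * (A_fun r powr (- q) * spow p (x / \<kappa>))
      = \<gamma> powr (1 - p) * (\<kappa> * (1 / \<kappa>) powr p) * A_fun r powr (- q) * spow p x"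
    using spow_mult_pos[of "1 / \<kappa>" p x] \<kappa> \<epsilon>2 by simp
  also have "\<dots> = (\<gamma> powr (1 - p) * \<gamma> powr (p - 1)) * (2 powr q * A_fun r powr (- q)) * spow p x"
    by (simp add: \<kappa>p)
  also have "\<dots> = (1 + r\<^sup>2) powr q * spow p x"
    using \<gamma> by (simp add: powr_add[symmetric] two_powr_mult_A_fun_powr)
  finally show ?thesis .
qed

lemma blowup_rescaling_ode:
  assumes p: "p > 1" and \<gamma>: "\<gamma> > 0" and sol: "ivp_sol N p \<gamma> (u \<gamma>)"
  defines "\<epsilon> \<equiv> \<gamma> powr (- 1 / mu p)" and "v \<equiv> blowup_rescaling N p u \<gamma>"
  obtains v' v'' where
    "\<forall>t\<ge>0. (v has_real_derivative v' t) (at t within {0..})"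
    "\<forall>t>0. (v' has_real_derivative v'' t) (at t)"
    "\<forall>t>0. v'' t + (real N - 1) / t * v' t
            + real N * (real N - 2) / 4 * \<epsilon>\<^sup>2 * (A_fun (\<epsilon> * t))\<^sup>2 * v t
            + (1 + (\<epsilon> * t)\<^sup>2) powr q_exp N p * spow p (v t) = 0"
    "v 0 = 2 powr (- (q_exp N p / (p - 1)))" "v' 0 = 0"
proof -
  define q c where "q = q_exp N p" and "c = real N * (real N - 2) / 4"
  define \<kappa> where "\<kappa> = 2 powr (- (q / (p - 1))) / \<gamma>"
  have \<epsilon>: "\<epsilon> > 0" and \<kappa>: "\<kappa> > 0" using \<gamma> by (simp_all add: \<epsilon>_def \<kappa>_def)
  obtain U' U'' where U: "\<forall>r\<ge>0. (u \<gamma> has_real_derivative U' r) (at r within {0..})"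
      "\<forall>r>0. (U' has_real_derivative U'' r) (at r)"
      "\<forall>r>0. U'' r + (real N - 1) / r * U' r
                + (c * (A_fun r)\<^sup>2 * u \<gamma> r + A_fun r powr (- q) * spow p (u \<gamma> r)) = 0"
      "u \<gamma> 0 = \<gamma>" "U' 0 = 0"
    using sol unfolding ivp_sol_def c_def q_def spow_def by (auto simp: add.assoc)
  note rescaled = radial_ode_rescale[where k = "real N - 1" and \<kappa> = \<kappa>
      and F = "\<lambda>r x. c * (A_fun r)\<^sup>2 * x + A_fun r powr (- q) * spow p x", OF \<epsilon> U(1-3)]
  have v: "v = (\<lambda>t. \<kappa> * u \<gamma> (\<epsilon> * t))"
    by (simp add: fun_eq_iff v_def blowup_rescaling_def \<kappa>_def q_def \<epsilon>_def)
  show ?thesis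
  proof (rule that[of "\<lambda>t. \<kappa> * \<epsilon> * U' (\<epsilon> * t)" "\<lambda>t. \<kappa> * \<epsilon>\<^sup>2 * U'' (\<epsilon> * t)"])
    show "\<forall>t>0. \<kappa> * \<epsilon>\<^sup>2 * U'' (\<epsilon> * t) + (real N - 1) / t * (\<kappa> * \<epsilon> * U' (\<epsilon> * t))
            + real N * (real N - 2) / 4 * \<epsilon>\<^sup>2 * (A_fun (\<epsilon> * t))\<^sup>2 * v t
            + (1 + (\<epsilon> * t)\<^sup>2) powr q_exp N p * spow p (v t) = 0"
    proof (intro allI impI)
      fix t :: real
      assume t: "t > 0"
      have "u \<gamma> (\<epsilon> * t) = v t / \<kappa>" using \<kappa> by (simp add: v)
      then have "\<kappa> * \<epsilon>\<^sup>2 * (A_fun (\<epsilon> * t) powr (- q) * spow p (u \<gamma> (\<epsilon> * t)))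
          = (1 + (\<epsilon> * t)\<^sup>2) powr q * spow p (v t)"
        using rescaled_nonlinearity[OF \<gamma> p] by (simp add: \<kappa>_def \<epsilon>_def)
      moreover have "\<kappa> * \<epsilon>\<^sup>2 * (c * (A_fun (\<epsilon> * t))\<^sup>2 * u \<gamma> (\<epsilon> * t)
            + A_fun (\<epsilon> * t) powr (- q) * spow p (u \<gamma> (\<epsilon> * t)))
          = c * \<epsilon>\<^sup>2 * (A_fun (\<epsilon> * t))\<^sup>2 * v t
            + \<kappa> * \<epsilon>\<^sup>2 * (A_fun (\<epsilon> * t) powr (- q) * spow p (u \<gamma> (\<epsilon> * t)))"
        by (simp add: v algebra_simps)
      ultimately show "\<kappa> * \<epsilon>\<^sup>2 * U'' (\<epsilon> * t) + (real N - 1) / t * (\<kappa> * \<epsilon> * U' (\<epsilon> * t))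
            + real N * (real N - 2) / 4 * \<epsilon>\<^sup>2 * (A_fun (\<epsilon> * t))\<^sup>2 * v t
            + (1 + (\<epsilon> * t)\<^sup>2) powr q_exp N p * spow p (v t) = 0"
        using rescaled(3)[rule_format, OF t] unfolding c_def q_def by linarith
    qed
  qed (use rescaled U(4,5) \<gamma> in \<open>simp_all add: v \<kappa>_def q_def\<close>)
qed

lemma blowup_rescaling_differentiable:
  assumes "p > 1" "\<gamma> > 0" "ivp_sol N p \<gamma> (u \<gamma>)" "r > 0"
  shows "blowup_rescaling N p u \<gamma> differentiable (at r)"
  using blowup_rescaling_ode[where u = u, OF assms(1-3)] differentiable_at_pos_within_nonneg assms(4)
  by metis

lemma perturbed_power_nonlinearity:
  fixes c \<epsilon> r R q p M v w :: real
  assumes c: "c \<ge> 0" and q: "q \<ge> 0" and p: "p \<ge> 1" and r: "0 \<le> r" "r \<le> \<epsilon> * R"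
    and w: "\<bar>w\<bar> \<le> M" and vw: "\<bar>v - w\<bar> \<le> 1"
  shows "\<bar>c * \<epsilon>\<^sup>2 * (A_fun r)\<^sup>2 * v + (1 + r\<^sup>2) powr q * spow p v - spow p w\<bar>
         \<le> (4 * c * \<epsilon>\<^sup>2 * (M + 1) + ((1 + \<epsilon>\<^sup>2 * R\<^sup>2) powr q - 1) * (M + 1) powr p)
           + p * (M + 1) powr (p - 1) * \<bar>v - w\<bar>"
proof -
  have v: "\<bar>v\<bar> \<le> M + 1" using w vw by linarith
  have "0 \<le> A_fun r" "A_fun r \<le> 2" by (auto simp: A_fun_def field_simps add_pos_nonneg)
  then have "(A_fun r)\<^sup>2 \<le> 4" using power_mono[of "A_fun r" 2 2] by simp
  then have "(A_fun r)\<^sup>2 * \<bar>v\<bar> \<le> 4 * (M + 1)" using v by (intro mult_mono) auto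
  then have "c * \<epsilon>\<^sup>2 * ((A_fun r)\<^sup>2 * \<bar>v\<bar>) \<le> c * \<epsilon>\<^sup>2 * (4 * (M + 1))"
    using c by (intro mult_left_mono) auto
  then have linear: "\<bar>c * \<epsilon>\<^sup>2 * (A_fun r)\<^sup>2 * v\<bar> \<le> 4 * c * \<epsilon>\<^sup>2 * (M + 1)"
    using c by (simp add: abs_mult algebra_simps)
  have "r\<^sup>2 \<le> \<epsilon>\<^sup>2 * R\<^sup>2" using power_mono[OF r(2) r(1), of 2] by (simp add: power_mult_distrib)
  then have weight: "1 \<le> (1 + r\<^sup>2) powr q" "(1 + r\<^sup>2) powr q \<le> (1 + \<epsilon>\<^sup>2 * R\<^sup>2) powr q"
    using q by (simp_all add: ge_one_powr_ge_zero powr_mono2)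
  have "\<bar>((1 + r\<^sup>2) powr q - 1) * spow p v\<bar> \<le> ((1 + \<epsilon>\<^sup>2 * R\<^sup>2) powr q - 1) * (M + 1) powr p"
  proof -
    have "\<bar>spow p v\<bar> \<le> (M + 1) powr p" using v p by (simp add: abs_spow powr_mono2)
    then show ?thesis using weight by (simp add: abs_mult mult_mono)
  qed
  moreover have "\<bar>spow p v - spow p w\<bar> \<le> p * (M + 1) powr (p - 1) * \<bar>v - w\<bar>"
    using spow_lipschitz[OF p v] w by simp
  moreover have "c * \<epsilon>\<^sup>2 * (A_fun r)\<^sup>2 * v + (1 + r\<^sup>2) powr q * spow p v - spow p w
      = c * \<epsilon>\<^sup>2 * (A_fun r)\<^sup>2 * v + ((1 + r\<^sup>2) powr q - 1) * spow p v + (spow p v - spow p w)"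
    by (simp add: algebra_simps)
  ultimately show ?thesis
    using linear abs_triangle_ineq[of "c * \<epsilon>\<^sup>2 * (A_fun r)\<^sup>2 * v + ((1 + r\<^sup>2) powr q - 1) * spow p v"]
      abs_triangle_ineq[of "c * \<epsilon>\<^sup>2 * (A_fun r)\<^sup>2 * v"] by linarith
qed

text \<open>With \<open>M\<close> a bound of \<open>ubar\<close> on \<open>[0, R]\<close> and \<open>\<epsilon> = \<gamma>^(-1/\<mu>)\<close>, the size of the perturbation
  terms of the rescaled equation on \<open>[0, R]\<close>.\<close>

definition rescaling_defect :: "nat \<Rightarrow> real \<Rightarrow> real \<Rightarrow> real \<Rightarrow> real \<Rightarrow> real" where
  "rescaling_defect N p M R \<epsilon> =
     real N * (real N - 2) * \<epsilon>\<^sup>2 * (M + 1) + ((1 + \<epsilon>\<^sup>2 * R\<^sup>2) powr q_exp N p - 1) * (M + 1) powr p"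

lemma blowup_rescaling_energy_bound:
  assumes N: "N \<ge> 3" and p: "p > pS N" and \<gamma>: "\<gamma> > 0" and sol: "ivp_sol N p \<gamma> (u \<gamma>)"
    and ubar: "ubar_sol N p ub" and R: "R > 0" and M: "\<forall>t\<in>{0..R}. \<bar>ub t\<bar> \<le> M"
  defines "L \<equiv> p * (M + 1) powr (p - 1)"
    and "\<delta> \<equiv> rescaling_defect N p M R (\<gamma> powr (- 1 / mu p))"
  assumes small: "exp ((L + 2) * R) * \<delta>\<^sup>2 / (L + 2) < 1 / 4"
  shows "\<forall>t\<in>{0<..R}. (blowup_rescaling N p u \<gamma> t - ub t)\<^sup>2
           + (deriv (blowup_rescaling N p u \<gamma>) t - deriv ub t)\<^sup>2 \<le> exp ((L + 2) * R) * \<delta>\<^sup>2 / (L + 2)"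
proof
  fix t assume "t \<in> {0<..R}"
  then have t: "t > 0" "t \<le> R" by simp_all
  have p1: "p > 1" and q: "q_exp N p > 0" using supercritical_constants[OF N p] by auto
  define \<epsilon> where "\<epsilon> = \<gamma> powr (- 1 / mu p)"
  define v where "v = blowup_rescaling N p u \<gamma>"
  have \<epsilon>: "\<epsilon> > 0" using \<gamma> by (simp add: \<epsilon>_def)
  obtain v' v'' where v: "\<forall>t\<ge>0. (v has_real_derivative v' t) (at t within {0..})"
      "\<forall>t>0. (v' has_real_derivative v'' t) (at t)"
      "\<forall>t>0. v'' t + (real N - 1) / t * v' t
            + real N * (real N - 2) / 4 * \<epsilon>\<^sup>2 * (A_fun (\<epsilon> * t))\<^sup>2 * v t
            + (1 + (\<epsilon> * t)\<^sup>2) powr q_exp N p * spow p (v t) = 0"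
      "v 0 = 2 powr (- (q_exp N p / (p - 1)))" "v' 0 = 0"
    using blowup_rescaling_ode[where u = u, OF p1 \<gamma> sol] unfolding \<epsilon>_def v_def by blast
  obtain W' W'' where W: "\<forall>r\<ge>0. (ub has_real_derivative W' r) (at r within {0..})"
      "\<forall>r>0. (W' has_real_derivative W'' r) (at r)"
      "\<forall>r>0. W'' r + (real N - 1) / r * W' r + spow p (ub r) = 0"
      "ub 0 = 2 powr (- (q_exp N p / (p - 1)))" "W' 0 = 0"
    using ubar unfolding ubar_sol_def spow_def by blast
  have "(v t - ub t)\<^sup>2 + (v' t - W' t)\<^sup>2 \<le> exp ((L + 2) * R) * \<delta>\<^sup>2 / (L + 2)"
  proof (rule radial_energy_estimate[where k = "real N - 1" and e = "\<lambda>t. v t - ub t"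
        and e' = "\<lambda>t. v' t - W' t" and e'' = "\<lambda>t. v'' t - W'' t"
        and D = "\<lambda>t. real N * (real N - 2) / 4 * \<epsilon>\<^sup>2 * (A_fun (\<epsilon> * t))\<^sup>2 * v t
                   + (1 + (\<epsilon> * t)\<^sup>2) powr q_exp N p * spow p (v t) - spow p (ub t)"])
    show "((\<lambda>t. v t - ub t) has_real_derivative v' s - W' s) (at s within {0..})" if "s \<ge> 0" for s
      using DERIV_diff[OF v(1)[rule_format, OF that] W(1)[rule_format, OF that]] .
    show "((\<lambda>t. v' t - W' t) has_real_derivative v'' s - W'' s) (at s)" if "s > 0" for s
      using DERIV_diff[OF v(2)[rule_format, OF that] W(2)[rule_format, OF that]] .
    show "\<bar>real N * (real N - 2) / 4 * \<epsilon>\<^sup>2 * (A_fun (\<epsilon> * s))\<^sup>2 * v s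
            + (1 + (\<epsilon> * s)\<^sup>2) powr q_exp N p * spow p (v s) - spow p (ub s)\<bar>
          \<le> \<delta> + L * \<bar>v s - ub s\<bar>" if "0 < s" "s \<le> R" "\<bar>v s - ub s\<bar> \<le> 1" for s
      using perturbed_power_nonlinearity[of "real N * (real N - 2) / 4" "q_exp N p" p "\<epsilon> * s" \<epsilon> R
          "ub s" M "v s"] that N q p1 \<epsilon> M
      by (simp add: \<delta>_def L_def \<epsilon>_def rescaling_defect_def power_mult_distrib)
    show "v'' s - W'' s + (real N - 1) / s * (v' s - W' s)
        + (real N * (real N - 2) / 4 * \<epsilon>\<^sup>2 * (A_fun (\<epsilon> * s))\<^sup>2 * v s
           + (1 + (\<epsilon> * s)\<^sup>2) powr q_exp N p * spow p (v s) - spow p (ub s)) = 0" if "s > 0" for s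
      using v(3)[rule_format, OF that] W(3)[rule_format, OF that]
        right_diff_distrib[of "(real N - 1) / s" "v' s" "W' s"] by linarith
    show "L \<ge> 0" using p1 by (simp add: L_def)
    show "real N - 1 \<ge> 0" using N by simp
    show "v 0 - ub 0 = 0" "v' 0 - W' 0 = 0" using v(4,5) W(4,5) by simp_all
    show "t \<in> {0..R}" using t by simp
  qed (fact R small)+
  moreover have "deriv v t = v' t" "deriv ub t = W' t"
    using v(1) W(1) t deriv_at_pos_within_nonneg by (simp_all add: less_imp_le)
  ultimately show "(blowup_rescaling N p u \<gamma> t - ub t)\<^sup>2
           + (deriv (blowup_rescaling N p u \<gamma>) t - deriv ub t)\<^sup>2 \<le> exp ((L + 2) * R) * \<delta>\<^sup>2 / (L + 2)"
    by (simp add: v_def)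
qed

lemma blowup_rescaling_uniform_limit:
  assumes N: "N \<ge> 3" and p: "p > pS N" and sol: "\<forall>\<gamma>>0. ivp_sol N p \<gamma> (u \<gamma>)"
    and ubar: "ubar_sol N p ub" and R: "R > 0"
  shows "uniform_limit {0<..R} (blowup_rescaling N p u) ub at_top"
    and "uniform_limit {0<..R} (\<lambda>\<gamma>. deriv (blowup_rescaling N p u \<gamma>)) (deriv ub) at_top"
proof -
  have mu: "mu p > 0" using supercritical_constants[OF N p] by simp
  obtain W' where "\<forall>r\<ge>0. (ub has_real_derivative W' r) (at r within {0..})"
    using ubar unfolding ubar_sol_def by blast
  then have "continuous_on {0..R} ub"
    by (intro DERIV_continuous_on[of _ _ W']) (auto intro: DERIV_subset)
  then obtain M where M: "\<forall>t\<in>{0..R}. \<bar>ub t\<bar> \<le> M"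
    using continuous_on_compact_bound[of "{0..R}" ub] by (metis atLeastAtMost_iff compact_Icc real_norm_def)
  define L where "L = p * (M + 1) powr (p - 1)"
  have L: "L + 2 > 0" using supercritical_constants[OF N p] by (simp add: L_def add_nonneg_pos)
  define B where "B \<gamma> = exp ((L + 2) * R) * (rescaling_defect N p M R (\<gamma> powr (- 1 / mu p)))\<^sup>2 / (L + 2)"
    for \<gamma>
  have "((\<lambda>\<gamma>. \<gamma> powr (- 1 / mu p)) \<longlongrightarrow> 0) at_top"
    using mu by (intro tendsto_neg_powr filterlim_ident) simp
  then have "((\<lambda>\<gamma>. rescaling_defect N p M R (\<gamma> powr (- 1 / mu p))) \<longlongrightarrow> rescaling_defect N p M R 0) at_top"
    unfolding rescaling_defect_def by (intro tendsto_intros) auto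
  then have B_lim: "(B \<longlongrightarrow> 0) at_top"
    unfolding B_def using L by (intro tendsto_eq_intros) (auto simp: rescaling_defect_def)
  have "eventually (\<lambda>\<gamma>. \<forall>t\<in>{0<..R}. (blowup_rescaling N p u \<gamma> t - ub t)\<^sup>2
          + (deriv (blowup_rescaling N p u \<gamma>) t - deriv ub t)\<^sup>2 \<le> B \<gamma>) at_top"
    using eventually_gt_at_top[of 0] order_tendstoD(2)[OF B_lim, of "1 / 4", simplified]
  proof eventually_elim
    case (elim \<gamma>)
    then show ?case
      using blowup_rescaling_energy_bound[OF N p _ _ ubar R M, of \<gamma> u] sol
      unfolding B_def L_def by simp
  qed
  from uniform_limit_of_energy_bound[OF B_lim this]
  show "uniform_limit {0<..R} (blowup_rescaling N p u) ub at_top"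
    and "uniform_limit {0<..R} (\<lambda>\<gamma>. deriv (blowup_rescaling N p u \<gamma>)) (deriv ub) at_top" .
qed

section \<open>The Emden--Fowler variable\<close>

definition radial_to_emden :: "real \<Rightarrow> real \<Rightarrow> real \<Rightarrow> (real \<Rightarrow> real) \<Rightarrow> real \<Rightarrow> real" where
  "radial_to_emden m a \<mu> f s = f (exp (m * s)) / (a * exp (- m * \<mu> * s))"

lemma radial_to_emden_eq: "radial_to_emden m a \<mu> f s = f (exp (m * s)) * exp (m * \<mu> * s) / a"
  by (simp add: radial_to_emden_def exp_minus divide_inverse mult_ac)

lemma has_real_derivative_radial_to_emden:
  assumes "(f has_real_derivative f') (at (exp (m * s)))"
  shows "(radial_to_emden m a \<mu> f has_real_derivative
           (f' * m * exp (m * s) + f (exp (m * s)) * m * \<mu>) * exp (m * \<mu> * s) / a) (at s)"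
proof -
  have "((\<lambda>s. f (exp (m * s))) has_real_derivative f' * (exp (m * s) * m)) (at s)"
    by (rule DERIV_chain2[where g = "\<lambda>s. exp (m * s)", OF assms]) (auto intro!: derivative_eq_intros)
  then have "((\<lambda>s. f (exp (m * s)) * exp (m * \<mu> * s)) has_real_derivative
      f' * (exp (m * s) * m) * exp (m * \<mu> * s) + f (exp (m * s)) * (exp (m * \<mu> * s) * (m * \<mu>))) (at s)"
    by (auto intro!: derivative_eq_intros)
  from DERIV_cdivide[OF this, of a] show ?thesis by (simp add: radial_to_emden_eq[abs_def] algebra_simps)
qed

lemma deriv_radial_to_emden:
  "f differentiable (at (exp (m * s))) \<Longrightarrow> deriv (radial_to_emden m a \<mu> f) s
     = (deriv f (exp (m * s)) * m * exp (m * s) + f (exp (m * s)) * m * \<mu>) * exp (m * \<mu> * s) / a"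
  by (intro DERIV_imp_deriv has_real_derivative_radial_to_emden)
     (simp add: DERIV_deriv_iff_real_differentiable)

lemma radial_to_emden_pointwise_bound:
  fixes f g :: "real \<Rightarrow> real"
  assumes m: "m > 0" and \<mu>: "\<mu> > 0" and a: "a > 0" and s: "s \<le> S"
    and close: "\<forall>r\<in>{0<..exp (m * S)}. \<bar>f r - g r\<bar> \<le> \<eta> \<and> \<bar>deriv f r - deriv g r\<bar> \<le> \<eta>"
    and df: "f differentiable (at (exp (m * s)))" and dg: "g differentiable (at (exp (m * s)))"
  defines "K \<equiv> (1 + m * exp (m * S) + m * \<mu>) * exp (m * \<mu> * S) / a"
  shows "\<bar>radial_to_emden m a \<mu> f s - radial_to_emden m a \<mu> g s\<bar> \<le> K * \<eta>"
    and "\<bar>deriv (radial_to_emden m a \<mu> f) s - deriv (radial_to_emden m a \<mu> g) s\<bar> \<le> K * \<eta>"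
proof -
  define \<rho> X where "\<rho> = exp (m * s)" and "X = exp (m * \<mu> * s)"
  have \<rho>: "0 < \<rho>" "\<rho> \<le> exp (m * S)" and X: "0 < X" "X \<le> exp (m * \<mu> * S)"
    using m \<mu> s by (simp_all add: \<rho>_def X_def)
  have f0: "\<bar>f \<rho> - g \<rho>\<bar> \<le> \<eta>" and f1: "\<bar>deriv f \<rho> - deriv g \<rho>\<bar> \<le> \<eta>"
    using close \<rho> by auto
  then have \<eta>: "\<eta> \<ge> 0" by linarith
  have "\<bar>(deriv f \<rho> - deriv g \<rho>) * m * \<rho> + (f \<rho> - g \<rho>) * m * \<mu>\<bar>
      \<le> \<eta> * m * exp (m * S) + \<eta> * m * \<mu>"
  proof -
    have "\<bar>deriv f \<rho> - deriv g \<rho>\<bar> * (m * \<rho>) \<le> \<eta> * (m * exp (m * S))"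
      using f1 \<rho> m \<eta> by (intro mult_mono) auto
    moreover have "\<bar>f \<rho> - g \<rho>\<bar> * (m * \<mu>) \<le> \<eta> * (m * \<mu>)"
      using f0 m \<mu> by (intro mult_right_mono) auto
    moreover have "\<bar>(deriv f \<rho> - deriv g \<rho>) * m * \<rho>\<bar> = \<bar>deriv f \<rho> - deriv g \<rho>\<bar> * (m * \<rho>)"
      and "\<bar>(f \<rho> - g \<rho>) * m * \<mu>\<bar> = \<bar>f \<rho> - g \<rho>\<bar> * (m * \<mu>)"
      using m \<mu> \<rho> by (simp_all add: abs_mult)
    ultimately show ?thesis
      using abs_triangle_ineq[of "(deriv f \<rho> - deriv g \<rho>) * m * \<rho>" "(f \<rho> - g \<rho>) * m * \<mu>"]
      by linarith
  qed
  then have "\<bar>(deriv f \<rho> - deriv g \<rho>) * m * \<rho> + (f \<rho> - g \<rho>) * m * \<mu>\<bar> * X / a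
      \<le> (\<eta> * m * exp (m * S) + \<eta> * m * \<mu>) * exp (m * \<mu> * S) / a"
    using X a by (intro divide_right_mono mult_mono) auto
  also have "\<dots> \<le> K * \<eta>"
    using \<eta> m \<mu> a by (simp add: K_def field_simps)
  finally have "\<bar>(deriv f \<rho> - deriv g \<rho>) * m * \<rho> + (f \<rho> - g \<rho>) * m * \<mu>\<bar> * X / a \<le> K * \<eta>" .
  moreover have "deriv (radial_to_emden m a \<mu> f) s - deriv (radial_to_emden m a \<mu> g) s
      = ((deriv f \<rho> - deriv g \<rho>) * m * \<rho> + (f \<rho> - g \<rho>) * m * \<mu>) * X / a"
    unfolding deriv_radial_to_emden[OF df] deriv_radial_to_emden[OF dg] \<rho>_def X_def
    using a by (simp add: field_simps)
  ultimately show "\<bar>deriv (radial_to_emden m a \<mu> f) s - deriv (radial_to_emden m a \<mu> g) s\<bar> \<le> K * \<eta>"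
    using X a by (simp add: abs_mult)
  have "\<bar>f \<rho> - g \<rho>\<bar> * X / a \<le> \<eta> * exp (m * \<mu> * S) / a"
    using f0 X a \<eta> by (intro divide_right_mono mult_mono) auto
  also have "\<dots> \<le> K * \<eta>"
    using \<eta> m \<mu> a by (simp add: K_def field_simps)
  finally have "\<bar>f \<rho> - g \<rho>\<bar> * X / a \<le> K * \<eta>" .
  moreover have "radial_to_emden m a \<mu> f s - radial_to_emden m a \<mu> g s = (f \<rho> - g \<rho>) * X / a"
    unfolding radial_to_emden_eq \<rho>_def X_def by (simp add: diff_divide_distrib left_diff_distrib)
  ultimately show "\<bar>radial_to_emden m a \<mu> f s - radial_to_emden m a \<mu> g s\<bar> \<le> K * \<eta>"
    using X a by (simp add: abs_mult)
qed

lemma uniform_limit_radial_to_emden: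
  fixes f :: "'a \<Rightarrow> real \<Rightarrow> real" and g :: "real \<Rightarrow> real"
  assumes m: "m > 0" and \<mu>: "\<mu> > 0" and a: "a > 0"
    and lim: "uniform_limit {0<..exp (m * S)} f g F"
    and deriv_lim: "uniform_limit {0<..exp (m * S)} (\<lambda>\<gamma>. deriv (f \<gamma>)) (deriv g) F"
    and df: "eventually (\<lambda>\<gamma>. \<forall>r>0. f \<gamma> differentiable (at r)) F"
    and dg: "\<forall>r>0. g differentiable (at r)"
  shows "uniform_limit {..S} (\<lambda>\<gamma>. radial_to_emden m a \<mu> (f \<gamma>)) (radial_to_emden m a \<mu> g) F"
    and "uniform_limit {..S} (\<lambda>\<gamma>. deriv (radial_to_emden m a \<mu> (f \<gamma>)))
           (deriv (radial_to_emden m a \<mu> g)) F"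
proof -
  define K where "K = (1 + m * exp (m * S) + m * \<mu>) * exp (m * \<mu> * S) / a"
  have K: "K > 0" using m \<mu> a by (simp add: K_def add_pos_nonneg)
  have close: "eventually (\<lambda>\<gamma>. \<forall>s\<in>{..S}.
      \<bar>radial_to_emden m a \<mu> (f \<gamma>) s - radial_to_emden m a \<mu> g s\<bar> < \<eta> \<and>
      \<bar>deriv (radial_to_emden m a \<mu> (f \<gamma>)) s - deriv (radial_to_emden m a \<mu> g) s\<bar> < \<eta>) F"
    if \<eta>: "\<eta> > 0" for \<eta>
  proof -
    have "\<eta> / (2 * K) > 0" using \<eta> K by simp
    from lim[unfolded uniform_limit_iff, rule_format, OF this]
      deriv_lim[unfolded uniform_limit_iff, rule_format, OF this] df
    show ?thesis
    proof eventually_elim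
      case (elim \<gamma>)
      then have "\<forall>r\<in>{0<..exp (m * S)}.
          \<bar>f \<gamma> r - g r\<bar> \<le> \<eta> / (2 * K) \<and> \<bar>deriv (f \<gamma>) r - deriv g r\<bar> \<le> \<eta> / (2 * K)"
        by (auto simp: dist_real_def less_imp_le)
      note bound = radial_to_emden_pointwise_bound[OF m \<mu> a _ this]
      have "K * (\<eta> / (2 * K)) < \<eta>" using K \<eta> by simp
      then show ?case
        using bound[folded K_def] elim(3) dg by fastforce
    qed
  qed
  show "uniform_limit {..S} (\<lambda>\<gamma>. radial_to_emden m a \<mu> (f \<gamma>)) (radial_to_emden m a \<mu> g) F"
    and "uniform_limit {..S} (\<lambda>\<gamma>. deriv (radial_to_emden m a \<mu> (f \<gamma>)))
           (deriv (radial_to_emden m a \<mu> g)) F"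
    unfolding uniform_limit_iff dist_real_def using eventually_mono[OF close] by auto
qed

lemma ybar_eq_radial_to_emden: "ybar N p ub = radial_to_emden (m_const N p) (a_const N p) (mu p) ub"
  by (simp add: fun_eq_iff ybar_def radial_to_emden_def)

lemma yhat_eq_radial_to_emden:
  assumes \<gamma>: "\<gamma> > 0" and m: "m_const N p \<noteq> 0" and \<mu>: "mu p \<noteq> 0"
  shows "yhat N p u \<gamma> = radial_to_emden (m_const N p) (a_const N p) (mu p) (blowup_rescaling N p u \<gamma>)"
proof
  fix s
  define m where "m = m_const N p"
  define \<tau> where "\<tau> = s - ln \<gamma> / (m * mu p)"
  have radius: "m * \<tau> = - 1 / mu p * ln \<gamma> + m * s"
    using m \<mu> by (simp add: \<tau>_def m_def field_simps)
  have r: "exp (m * \<tau>) = \<gamma> powr (- 1 / mu p) * exp (m * s)"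
    unfolding radius exp_add using \<gamma> by (simp add: powr_def)
  have weight: "- mu p * (m * \<tau>) = ln \<gamma> + - m * mu p * s"
    using m \<mu> by (simp add: \<tau>_def m_def field_simps)
  have "exp (m * \<tau>) powr (- mu p) = exp (- mu p * (m * \<tau>))" by (simp add: powr_def)
  also have "\<dots> = \<gamma> * exp (- m * mu p * s)" unfolding weight exp_add using \<gamma> by simp
  finally have w: "exp (m * \<tau>) powr (- mu p) = \<gamma> * exp (- m * mu p * s)" .
  show "yhat N p u \<gamma> s = radial_to_emden m (a_const N p) (mu p) (blowup_rescaling N p u \<gamma>) s"
    unfolding yhat_def y_fun_def radial_to_emden_def blowup_rescaling_def m_def[symmetric] \<tau>_def[symmetric] w
    unfolding r
    using \<gamma> by (simp add: field_simps)
qed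

theorem lemma5p2:
  fixes N :: nat and p :: real and u :: "real \<Rightarrow> real \<Rightarrow> real" and ub :: "real \<Rightarrow> real"
  assumes "N \<ge> 3" and "p > pS N"
    and "\<forall>\<gamma>>0. ivp_sol N p \<gamma> (u \<gamma>)"
    and "ubar_sol N p ub"
  shows "\<forall>s0::real.
           uniform_limit {..s0} (\<lambda>\<gamma> s. yhat N p u \<gamma> s) (ybar N p ub) at_top \<and>
           uniform_limit {..s0} (\<lambda>\<gamma> s. deriv (\<lambda>s'. yhat N p u \<gamma> s') s)
              (deriv (ybar N p ub)) at_top"
proof
  fix s0 :: real
  note constants = supercritical_constants[OF assms(1,2)]
  define m a \<mu> where "m = m_const N p" and "a = a_const N p" and "\<mu> = mu p"
  have "eventually (\<lambda>\<gamma>. \<forall>r>0. blowup_rescaling N p u \<gamma> differentiable (at r)) at_top"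
    using eventually_gt_at_top[of 0]
    by eventually_elim (use assms(3) constants blowup_rescaling_differentiable in blast)
  from uniform_limit_radial_to_emden[where m = m and \<mu> = \<mu> and a = a and S = s0, OF _ _ _
      blowup_rescaling_uniform_limit[OF assms, of "exp (m * s0)"] this]
  have lim: "uniform_limit {..s0} (\<lambda>\<gamma>. radial_to_emden m a \<mu> (blowup_rescaling N p u \<gamma>))
          (radial_to_emden m a \<mu> ub) at_top"
    "uniform_limit {..s0} (\<lambda>\<gamma>. deriv (radial_to_emden m a \<mu> (blowup_rescaling N p u \<gamma>)))
          (deriv (radial_to_emden m a \<mu> ub)) at_top"
    using constants ubar_sol_differentiable[OF assms(4)] by (auto simp: m_def a_def \<mu>_def)
  have "eventually (\<lambda>\<gamma>. yhat N p u \<gamma> = radial_to_emden m a \<mu> (blowup_rescaling N p u \<gamma>)) at_top"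
    using eventually_gt_at_top[of 0] by eventually_elim
      (use constants in \<open>simp add: yhat_eq_radial_to_emden m_def a_def \<mu>_def\<close>)
  then have eq: "eventually (\<lambda>\<gamma>. \<forall>s\<in>{..s0}. yhat N p u \<gamma> s
        = radial_to_emden m a \<mu> (blowup_rescaling N p u \<gamma>) s) at_top"
    "eventually (\<lambda>\<gamma>. \<forall>s\<in>{..s0}. deriv (yhat N p u \<gamma>) s
        = deriv (radial_to_emden m a \<mu> (blowup_rescaling N p u \<gamma>)) s) at_top"
    by (auto elim: eventually_mono)
  show "uniform_limit {..s0} (\<lambda>\<gamma> s. yhat N p u \<gamma> s) (ybar N p ub) at_top \<and>
           uniform_limit {..s0} (\<lambda>\<gamma> s. deriv (\<lambda>s'. yhat N p u \<gamma> s') s)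
              (deriv (ybar N p ub)) at_top"
    unfolding ybar_eq_radial_to_emden m_def[symmetric] a_def[symmetric] \<mu>_def[symmetric]
    using uniform_limit_cong[OF eq(1) refl, THEN iffD2, OF lim(1)]
      uniform_limit_cong[OF eq(2) refl, THEN iffD2, OF lim(2)] by simp
qed

end
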